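(* The set $Sort_2$ of $2$-sortable permutations is a permutation class whose basis (the set of minimal permutations, under pattern containment, not in $Sort_2$) is infinite; in particular the basis contains every permutation $\alpha^{(j)}$, $j\ge0$, where $\alpha^{(j)}=2j+4,\ 3,\ \omega^{(j)},\ 1,\ 5,\ 2$ and $\omega^{(j)}=2j+2,2j+5,2j,2j+3,\dots,6,9,4,7$ is the concatenation over $i=j,j-1,\dots,1$ of the pairs $2i+2,2i+5$.
   Context: The $\mathfrak{D}^k\mathfrak{I}$ machine consists of $k$ stacks $D_1,\dots,D_k$ (decreasing stacks) followed in series by a stack $I$ (increasing stack). The input permutation is read from left to right. The elements of each $D_i$ must be in decreasing order from top to bottom (top is largest), and those of $I$ in increasing order from top to bottom (top is smallest). Operations: $d_0$ pushes the next input element into $D_1$; $d_i$ ($1\le i\le k-1$) moves the top of $D_i$ to $D_{i+1}$; $d_k$ moves the top of $D_k$ to $I$; $d_{k+1}$ pops the top of $I$ and appends it to the output. An operation is legal if it respects the stack restrictions. A permutation $\pi$ is $k$-sortable if some sequence of legal operations outputs the elements of $\pi$ in increasing order; $Sort_k$ is the set of $k$-sortable permutations. A class is a downset of the pattern containment poset. *)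

theory Defs
  imports Main
begin

definition is_perm :: "nat list \<Rightarrow> bool" where
  "is_perm p \<longleftrightarrow> distinct p \<and> set p = {1..length p}"

definition order_iso :: "nat list \<Rightarrow> nat list \<Rightarrow> bool" where
  "order_iso xs ys \<longleftrightarrow> length xs = length ys \<and>
     (\<forall>i<length xs. \<forall>j<length xs. xs!i < xs!j \<longleftrightarrow> ys!i < ys!j)"

definition contains :: "nat list \<Rightarrow> nat list \<Rightarrow> bool" where
  "contains p s \<longleftrightarrow> (\<exists>A. order_iso (nths p A) s)"

definition is_class :: "nat list set \<Rightarrow> bool" where
  "is_class C \<longleftrightarrow> (\<forall>p\<in>C. is_perm p) \<and>
     (\<forall>p\<in>C. \<forall>s. is_perm s \<and> contains p s \<longrightarrow> s \<in> C)"

definition basis :: "nat list set \<Rightarrow> nat list set" where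
  "basis C = {s. is_perm s \<and> s \<notin> C \<and>
     (\<forall>t. is_perm t \<and> contains s t \<and> t \<noteq> s \<longrightarrow> t \<in> C)}"

text \<open>Machine states: (input, decreasing stacks D_1..D_k, stack I, output).
  Stacks are lists with the head being the top.\<close>
type_synonym state = "nat list \<times> nat list list \<times> nat list \<times> nat list"

inductive step :: "nat \<Rightarrow> state \<Rightarrow> state \<Rightarrow> bool" for k :: nat where
  d0: "\<lbrakk>1 \<le> k; ds!0 = [] \<or> x > hd (ds!0)\<rbrakk> \<Longrightarrow>
        step k (x # inp, ds, I, out) (inp, ds[0 := x # ds!0], I, out)"
| di: "\<lbrakk>Suc i < k; ds!i = x # r; ds!(Suc i) = [] \<or> x > hd (ds!(Suc i))\<rbrakk> \<Longrightarrow>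
        step k (inp, ds, I, out) (inp, ds[i := r, Suc i := x # ds!(Suc i)], I, out)"
| dk: "\<lbrakk>1 \<le> k; ds!(k-1) = x # r; I = [] \<or> x < hd I\<rbrakk> \<Longrightarrow>
        step k (inp, ds, I, out) (inp, ds[k-1 := r], x # I, out)"
| dout: "step k (inp, ds, x # I, out) (inp, ds, I, out @ [x])"

definition sortable :: "nat \<Rightarrow> nat list \<Rightarrow> bool" where
  "sortable k p \<longleftrightarrow>
     (step k)\<^sup>*\<^sup>* (p, replicate k [], [], []) ([], replicate k [], [], sort p)"

definition Sort :: "nat \<Rightarrow> nat list set" where
  "Sort k = {p. is_perm p \<and> sortable k p}"

definition omega :: "nat \<Rightarrow> nat list" where
  "omega j = concat (map (\<lambda>i. [2*i+2, 2*i+5]) (rev [1..<j+1]))"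

definition alpha :: "nat \<Rightarrow> nat list" where
  "alpha j = [2*j+4, 3] @ omega j @ [1, 5, 2]"

lemma "alpha 0 = [4,3,1,5,2]" "alpha 2 = [8,3,6,9,4,7,1,5,2]"
  by (simp_all add: alpha_def omega_def upt_rec)

end

theory Submission
  imports Defs "HOL-Library.Multiset"
begin

text \<open>
  Erasing the entries outside a set, or relabelling the entries by a strictly increasing map,
  turns every run of the machine into a run of the same machine (a move of an erased entry
  becomes no move at all). Hence patterns of sortable permutations are sortable, and a
  permutation belongs to the basis as soon as it is not sortable while each of its one-point
  deletions is.

  On input alpha j the two-stack machine has essentially one run. The entry 3 stays at the
  bottom of D1, and each pair 2i+2, 2i+5 of omega j passes through the stacks so that 2i+5
  and the previous top of D2 go to I while 2i+2 takes the place in D2. At the end 4 sits in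
  D2 and has to enter I while 5 still precedes 2 in the input. Every deviation leads to a dead
  end: a wrong output, or an entry y waiting in I while some z < y still has to get past some
  x > y in the stacks. Each one-point deletion of alpha j, on the other hand, is
  sorted by an explicit run. The alpha j are pairwise distinct, so the basis of
  Sort 2 is infinite.
\<close>

section \<open>Closure under patterns\<close>

definition wf_state :: "nat \<Rightarrow> state \<Rightarrow> bool" where
  "wf_state k s \<longleftrightarrow> (case s of (inp, ds, I, out) \<Rightarrow>
     length ds = k \<and> (\<forall>i<k. sorted_wrt (>) (ds!i)) \<and> sorted_wrt (<) I)"

fun state_vals :: "state \<Rightarrow> nat set" where
  "state_vals (inp, ds, I, out) = set inp \<union> \<Union>(set ` set ds) \<union> set I \<union> set out"

fun state_filter :: "(nat \<Rightarrow> bool) \<Rightarrow> state \<Rightarrow> state" where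
  "state_filter P (inp, ds, I, out) = (filter P inp, map (filter P) ds, filter P I, filter P out)"

fun state_map :: "(nat \<Rightarrow> nat) \<Rightarrow> state \<Rightarrow> state" where
  "state_map f (inp, ds, I, out) = (map f inp, map (map f) ds, map f I, map f out)"

lemma sorted_wrt_hd_imp_all:
  assumes "sorted_wrt R xs" "transp R" "xs = [] \<or> R x (hd xs)"
  shows "\<forall>y\<in>set xs. R x y"
  using assms by (cases xs) (auto dest: transpD)

lemma step_wf_state: "step k s t \<Longrightarrow> wf_state k s \<Longrightarrow> wf_state k t"
proof (induction rule: step.induct)
  case (d0 ds x inp I out)
  then have "sorted_wrt (>) (x # ds!0)"
    using sorted_wrt_hd_imp_all[of "(>)" "ds!0" x] by (simp add: wf_state_def)
  with d0 show ?case
    by (simp add: wf_state_def nth_list_update)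
next
  case (di i ds x r inp I out)
  then have "\<forall>i<k. sorted_wrt (>) (ds!i)"
    by (simp add: wf_state_def)
  then have "sorted_wrt (>) (ds!i)" "sorted_wrt (>) (ds!Suc i)"
    using di.hyps(1) Suc_lessD by blast+
  then have "sorted_wrt (>) r" "sorted_wrt (>) (x # ds!Suc i)"
    using di sorted_wrt_hd_imp_all[of "(>)" "ds!Suc i" x] by simp_all
  with di show ?case
    by (simp add: wf_state_def nth_list_update)
next
  case (dk ds x r I inp out)
  then have "\<forall>i<k. sorted_wrt (>) (ds!i)"
    by (simp add: wf_state_def)
  then have "sorted_wrt (>) (ds!(k-1))"
    using dk.hyps(1) by simp
  then have "sorted_wrt (>) r" "sorted_wrt (<) (x # I)"
    using dk sorted_wrt_hd_imp_all[of "(<)" I x] by (simp_all add: wf_state_def)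
  with dk show ?case
    by (simp add: wf_state_def nth_list_update)
next
  case (dout inp ds x I out)
  then show ?case by (simp add: wf_state_def)
qed

lemma steps_wf_state: "(step k)\<^sup>*\<^sup>* s t \<Longrightarrow> wf_state k s \<Longrightarrow> wf_state k t"
  by (induction rule: rtranclp_induct) (auto intro: step_wf_state)

lemma hd_bound: "\<forall>y\<in>set xs. R x y \<Longrightarrow> xs = [] \<or> R x (hd xs)"
  by (cases xs) auto

lemma map_update_eq: "f y = f (xs!i) \<Longrightarrow> map f (xs[i := y]) = map f xs"
  by (metis list_update_id map_update nth_map list_update_beyond not_less)

lemma step_state_filter:
  assumes "step k s t" "wf_state k s"
  shows "step k (state_filter P s) (state_filter P t) \<or> state_filter P t = state_filter P s"
  using assms
proof (induction rule: step.induct)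
  case (d0 ds x inp I out)
  let ?ds = "map (filter P) ds"
  have len: "0 < length ds" and "sorted_wrt (>) (ds!0)"
    using d0 by (auto simp: wf_state_def)
  then have "?ds!0 = [] \<or> x > hd (?ds!0)"
    using d0.hyps(2) sorted_wrt_hd_imp_all[of "(>)" "ds!0" x] hd_bound[of "filter P (ds!0)" "(>)" x]
    by simp
  from step.d0[OF d0.hyps(1) this, of "filter P inp" "filter P I" "filter P out"] len
  show ?case by (cases "P x") (simp add: map_update, simp add: map_update_eq)
next
  case (di i ds x r inp I out)
  let ?ds = "map (filter P) ds"
  have len: "Suc i < length ds" and "sorted_wrt (>) (ds!Suc i)"
    using di by (auto simp: wf_state_def)
  then have "?ds!Suc i = [] \<or> x > hd (?ds!Suc i)"
    using di.hyps(3) sorted_wrt_hd_imp_all[of "(>)" "ds!Suc i" x] hd_bound[of "filter P (ds!Suc i)" "(>)" x]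
    by simp
  moreover have "?ds!i = (if P x then x # filter P r else filter P r)"
    using len di.hyps(2) by simp
  ultimately show ?case
    using step.di[OF di.hyps(1), of ?ds x "filter P r" "filter P inp" "filter P I" "filter P out"] len
    by (cases "P x") (simp add: map_update di.hyps(2), simp add: map_update_eq di.hyps(2))
next
  case (dk ds x r I inp out)
  have len: "k - 1 < length ds" and "sorted_wrt (<) I"
    using dk by (auto simp: wf_state_def)
  then have "filter P I = [] \<or> x < hd (filter P I)"
    using dk.hyps(3) sorted_wrt_hd_imp_all[of "(<)" I x] hd_bound[of "filter P I" "(<)" x] by simp
  then show ?case
    using step.dk[OF dk.hyps(1), of "map (filter P) ds" x "filter P r" "filter P I" "filter P inp" "filter P out"]
      len dk.hyps(2)
    by (cases "P x") (simp add: map_update, simp add: map_update_eq)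
next
  case (dout inp ds x I out)
  then show ?case by (auto intro: step.dout)
qed

lemma steps_state_filter:
  "(step k)\<^sup>*\<^sup>* s t \<Longrightarrow> wf_state k s \<Longrightarrow> (step k)\<^sup>*\<^sup>* (state_filter P s) (state_filter P t)"
proof (induction rule: rtranclp_induct)
  case (step t u)
  then have "wf_state k t" using steps_wf_state by blast
  with step show ?case
    using step_state_filter[of k t u P] by (auto intro: rtranclp.rtrancl_into_rtrancl)
qed simp

lemma wf_state_init: "wf_state k (p, replicate k [], [], [])"
  by (simp add: wf_state_def)

lemma sortable_filter: "sortable k p \<Longrightarrow> sortable k (filter P p)"
  unfolding sortable_def
  by (drule steps_state_filter[OF _ wf_state_init, where P = P]) (simp add: filter_sort)

lemma step_state_vals: "step k s t \<Longrightarrow> wf_state k s \<Longrightarrow> state_vals t \<subseteq> state_vals s"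
proof (induction rule: step.induct)
  case (d0 ds x inp I out)
  then have "ds!0 \<in> set ds" by (simp add: wf_state_def)
  then show ?case by (auto dest!: set_update_subset_insert[THEN subsetD])
next
  case (di i ds x r inp I out)
  then have "i < length ds" "Suc i < length ds" by (simp_all add: wf_state_def)
  then have "ds!i \<in> set ds" "ds!Suc i \<in> set ds" using nth_mem by blast+
  with di.hyps(2) show ?case by (force dest!: set_update_subset_insert[THEN subsetD])
next
  case (dk ds x r I inp out)
  then have "k - 1 < length ds" by (simp add: wf_state_def)
  then have "ds!(k-1) \<in> set ds" using nth_mem by blast
  with dk.hyps(2) show ?case by (force dest!: set_update_subset_insert[THEN subsetD])
qed auto

lemma steps_state_vals: "(step k)\<^sup>*\<^sup>* s t \<Longrightarrow> wf_state k s \<Longrightarrow> state_vals t \<subseteq> state_vals s"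
proof (induction rule: rtranclp_induct)
  case (step t u)
  then show ?case using steps_wf_state step_state_vals by blast
qed simp

lemma step_state_map:
  assumes "step k s t" "wf_state k s" "strict_mono_on V f" "state_vals s \<subseteq> V"
  shows "step k (state_map f s) (state_map f t)"
  using assms
proof (induction rule: step.induct)
  case (d0 ds x inp I out)
  then have "0 < length ds" "ds!0 \<in> set ds" by (simp_all add: wf_state_def)
  moreover have "set (ds!0) \<subseteq> V"
    using d0.prems(3) calculation(2) by auto
  then have "ds!0 = [] \<or> f x > f (hd (ds!0))"
    using d0 by (cases "ds!0") (auto dest: strict_mono_onD)
  ultimately show ?case
    using step.d0[OF d0.hyps(1), of "map (map f) ds" "f x" "map f inp" "map f I" "map f out"]
    by (cases "ds!0") (auto simp: map_update)
next
  case (di i ds x r inp I out)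
  then have "Suc i < length ds" by (simp add: wf_state_def)
  then have "ds!i \<in> set ds" "ds!Suc i \<in> set ds" by simp_all
  moreover have "set (ds!i) \<subseteq> V" "set (ds!Suc i) \<subseteq> V"
    using di.prems(3) calculation by auto
  then have "ds!Suc i = [] \<or> f x > f (hd (ds!Suc i))"
    using di by (cases "ds!Suc i") (auto dest: strict_mono_onD)
  ultimately show ?case
    using step.di[OF di.hyps(1), of "map (map f) ds" "f x" "map f r" "map f inp" "map f I" "map f out"]
      \<open>Suc i < length ds\<close> di.hyps(2)
    by (cases "ds!Suc i") (auto simp: map_update)
next
  case (dk ds x r I inp out)
  then have "k - 1 < length ds" by (simp add: wf_state_def)
  then have "ds!(k-1) \<in> set ds" by simp
  moreover have "set (ds!(k-1)) \<subseteq> V"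
    using dk.prems(3) calculation by auto
  then have "I = [] \<or> f x < f (hd I)"
    using dk by (cases I) (auto dest: strict_mono_onD)
  ultimately show ?case
    using step.dk[OF dk.hyps(1), of "map (map f) ds" "f x" "map f r" "map f I" "map f inp" "map f out"]
      \<open>k - 1 < length ds\<close> dk.hyps(2)
    by (cases I) (auto simp: map_update)
qed (auto intro: step.intros)

lemma steps_state_map:
  assumes "(step k)\<^sup>*\<^sup>* s t" "wf_state k s" "strict_mono_on (state_vals s) f"
  shows "(step k)\<^sup>*\<^sup>* (state_map f s) (state_map f t)"
  using assms(1)
proof (induction rule: rtranclp_induct)
  case (step t u)
  have "wf_state k t" "state_vals t \<subseteq> state_vals s"
    using step.hyps(1) assms(2) steps_wf_state steps_state_vals by blast+
  with step show ?case
    using step_state_map[OF step.hyps(2) _ assms(3)] by (auto intro: rtranclp.rtrancl_into_rtrancl)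
qed simp

lemma sort_map_strict_mono_on:
  assumes "strict_mono_on (set xs) f"
  shows "sort (map f xs) = map f (sort xs)"
proof (rule properties_for_sort)
  have "sorted_wrt (\<lambda>x y. f x \<le> f y) (sort xs)"
  proof (rule sorted_wrt_mono_rel[of _ "(\<le>)"])
    fix x y assume "x \<in> set (sort xs)" "y \<in> set (sort xs)" "x \<le> y"
    then show "f x \<le> f y" using assms by (cases "x = y") (auto dest: strict_mono_onD)
  qed simp
  then show "sorted (map f (sort xs))" by (simp add: sorted_map)
qed simp

lemma sortable_map: "sortable k p \<Longrightarrow> strict_mono_on (set p) f \<Longrightarrow> sortable k (map f p)"
  unfolding sortable_def
  by (drule steps_state_map[OF _ wf_state_init, where f = f]) (simp_all add: sort_map_strict_mono_on)

lemma order_iso_imp_map: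
  assumes "distinct xs" "order_iso xs ys"
  obtains f where "strict_mono_on (set xs) f" "ys = map f xs"
proof
  define f where "f x = the (map_of (zip xs ys) x)" for x
  have len: "length xs = length ys" using assms(2) unfolding order_iso_def by simp
  have f_nth: "f (xs!i) = ys!i" if "i < length xs" for i
    unfolding f_def using map_of_zip_nth[OF len assms(1)] that len by simp
  show "ys = map f xs" using len f_nth by (auto intro: nth_equalityI)
  show "strict_mono_on (set xs) f"
  proof (rule strict_mono_onI)
    fix r s assume "r \<in> set xs" "s \<in> set xs" "r < s"
    then obtain i j where "i < length xs" "j < length xs" "r = xs!i" "s = xs!j"
      by (auto simp: in_set_conv_nth)
    with \<open>r < s\<close> show "f r < f s" using f_nth assms(2) unfolding order_iso_def by auto
  qed
qed

lemma sortable_order_iso: "sortable k p \<Longrightarrow> distinct p \<Longrightarrow> order_iso p q \<Longrightarrow> sortable k q"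
  by (metis order_iso_imp_map sortable_map)

lemma contains_distinct_iff:
  "distinct p \<Longrightarrow> contains p s \<longleftrightarrow> (\<exists>P. order_iso (filter P p) s)"
  unfolding contains_def by (metis filter_eq_nths filter_in_nths)

lemma sortable_contains: "sortable k p \<Longrightarrow> distinct p \<Longrightarrow> contains p s \<Longrightarrow> sortable k s"
  by (metis contains_distinct_iff distinct_filter sortable_filter sortable_order_iso)

lemma is_class_Sort: "is_class (Sort k)"
  unfolding is_class_def Sort_def is_perm_def using sortable_contains by blast

lemma sort_is_perm:
  assumes "is_perm p"
  shows "sort p = [1..<length p + 1]"
proof (rule sorted_distinct_set_unique)
  have "set [1..<length p + 1] = {1..length p}" by (simp only: set_upt) auto
  then show "set (sort p) = set [1..<length p + 1]"
    using assms unfolding is_perm_def by simp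
qed (use assms in \<open>simp_all add: is_perm_def del: upt_Suc\<close>)

lemma order_iso_is_perm_eq:
  assumes "is_perm p" "is_perm q" "order_iso p q"
  shows "p = q"
proof -
  obtain f where f: "strict_mono_on (set p) f" "q = map f p"
    using order_iso_imp_map assms(3) assms(1) unfolding is_perm_def by blast
  have "map f [1..<length p + 1] = [1..<length p + 1]"
    using sort_map_strict_mono_on[OF f(1)] sort_is_perm[OF assms(1)] sort_is_perm[OF assms(2)]
    by (simp add: f(2))
  then have "\<forall>x\<in>set [1..<length p + 1]. f x = x"
    using map_eq_conv[of f _ "\<lambda>x. x"] by simp
  moreover have "set p = set [1..<length p + 1]"
    using sort_is_perm[OF assms(1)] by (metis set_sort)
  ultimately have "map f p = p" by (intro map_idI) auto
  with f(2) show ?thesis by simp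
qed

lemma proper_pattern_in_deletion:
  assumes "is_perm p" "is_perm s" "contains p s" "s \<noteq> p"
  shows "\<exists>v\<in>set p. contains (removeAll v p) s"
proof -
  have dist: "distinct p" using assms(1) unfolding is_perm_def by simp
  then obtain P where iso: "order_iso (filter P p) s"
    using assms(3) contains_distinct_iff by blast
  show ?thesis
  proof (cases "\<forall>x\<in>set p. P x")
    case True
    then have "p = s" using iso order_iso_is_perm_eq[OF assms(1,2)] by simp
    with assms(4) show ?thesis by simp
  next
    case False
    then obtain v where "v \<in> set p" "\<not> P v" by blast
    then have "filter P (removeAll v p) = filter P p"
      by (auto simp: removeAll_filter_not_eq filter_filter intro: filter_cong)
    moreover have "distinct (removeAll v p)" using dist by (simp add: distinct_removeAll)
    ultimately have "contains (removeAll v p) s"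
      using iso contains_distinct_iff by metis
    with \<open>v \<in> set p\<close> show ?thesis by blast
  qed
qed

lemma basis_SortI:
  assumes "is_perm p" "\<not> sortable k p" "\<forall>v\<in>set p. sortable k (removeAll v p)"
  shows "p \<in> basis (Sort k)"
proof -
  have "sortable k s" if s: "is_perm s" "contains p s" "s \<noteq> p" for s
  proof -
    obtain v where "v \<in> set p" "contains (removeAll v p) s"
      using proper_pattern_in_deletion assms(1) s by blast
    moreover have "distinct (removeAll v p)"
      using assms(1) unfolding is_perm_def by (simp add: distinct_removeAll)
    ultimately show ?thesis using assms(3) sortable_contains by blast
  qed
  with assms(1,2) show ?thesis unfolding basis_def Sort_def by blast
qed

section \<open>The machine with two decreasing stacks\<close>

type_synonym state2 = "nat list \<times> nat list \<times> nat list \<times> nat list \<times> nat list"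

fun state_of2 :: "state2 \<Rightarrow> state" where
  "state_of2 (inp, D1, D2, I, out) = (inp, [D1, D2], I, out)"

inductive step2 :: "state2 \<Rightarrow> state2 \<Rightarrow> bool" where
  d0: "D1 = [] \<or> x > hd D1 \<Longrightarrow> step2 (x # inp, D1, D2, I, out) (inp, x # D1, D2, I, out)"
| d1: "D2 = [] \<or> x > hd D2 \<Longrightarrow> step2 (inp, x # D1, D2, I, out) (inp, D1, x # D2, I, out)"
| d2: "I = [] \<or> x < hd I \<Longrightarrow> step2 (inp, D1, x # D2, I, out) (inp, D1, D2, x # I, out)"
| dout: "step2 (inp, D1, D2, x # I, out) (inp, D1, D2, I, out @ [x])"

lemma step_2_imp_step2:
  assumes "step 2 (inp, [D1, D2], I, out) t"
  shows "\<exists>s. t = state_of2 s \<and> step2 (inp, D1, D2, I, out) s"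
  using assms
proof (cases rule: step.cases)
  case (di i x r)
  then have "i = 0" by simp
  with di show ?thesis by (auto intro!: exI[of _ "(inp, r, x # D2, I, out)"] step2.d1)
qed (auto intro: step2.intros)

lemma steps_2_imp_steps2:
  "(step 2)\<^sup>*\<^sup>* (state_of2 s) t \<Longrightarrow> \<exists>s'. t = state_of2 s' \<and> step2\<^sup>*\<^sup>* s s'"
proof (induction rule: rtranclp_induct)
  case (step t u)
  then obtain s' where t: "t = state_of2 s'" and s_s': "step2\<^sup>*\<^sup>* s s'" by blast
  obtain inp D1 D2 I out where s': "s' = (inp, D1, D2, I, out)" by (cases s')
  from step.hyps(2) have "step 2 (inp, [D1, D2], I, out) u" by (simp add: t s')
  then obtain s'' where "u = state_of2 s''" "step2 s' s''" using step_2_imp_step2 s' by blast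
  with s_s' show ?case by (blast intro: rtranclp.rtrancl_into_rtrancl)
qed blast

lemma step2_imp_step: "step2 s t \<Longrightarrow> step 2 (state_of2 s) (state_of2 t)"
proof (induction rule: step2.induct)
  case (d0 D1 x inp D2 I out)
  then show ?case using step.d0[of 2 "[D1, D2]" x inp I out] by simp
next
  case (d1 D2 x inp D1 I out)
  then show ?case using step.di[of 0 2 "[x # D1, D2]" x D1 inp I out] by simp
next
  case (d2 I x inp D1 D2 out)
  then show ?case using step.dk[of 2 "[D1, x # D2]" x D2 I inp out] by simp
qed (simp add: step.dout)

lemma steps2_imp_steps: "step2\<^sup>*\<^sup>* s t \<Longrightarrow> (step 2)\<^sup>*\<^sup>* (state_of2 s) (state_of2 t)"
  by (induction rule: rtranclp_induct) (auto intro: rtranclp.rtrancl_into_rtrancl step2_imp_step)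

lemma state_of2_inj: "state_of2 s = state_of2 t \<Longrightarrow> s = t"
  by (cases s; cases t) auto

lemma sortable_2_iff: "sortable 2 p \<longleftrightarrow> step2\<^sup>*\<^sup>* (p, [], [], [], []) ([], [], [], [], sort p)"
proof
  assume "sortable 2 p"
  then have "(step 2)\<^sup>*\<^sup>* (state_of2 (p, [], [], [], [])) (state_of2 ([], [], [], [], sort p))"
    unfolding sortable_def by (simp add: numeral_2_eq_2)
  then show "step2\<^sup>*\<^sup>* (p, [], [], [], []) ([], [], [], [], sort p)"
    using steps_2_imp_steps2 state_of2_inj by metis
qed (drule steps2_imp_steps, simp add: sortable_def numeral_2_eq_2)

fun contents2 :: "state2 \<Rightarrow> nat list" where
  "contents2 (inp, D1, D2, I, out) = inp @ D1 @ D2 @ I @ out"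

fun stacks_sorted2 :: "state2 \<Rightarrow> bool" where
  "stacks_sorted2 (inp, D1, D2, I, out) \<longleftrightarrow>
     sorted_wrt (>) D1 \<and> sorted_wrt (>) D2 \<and> sorted_wrt (<) I"

lemma step2_mset_contents: "step2 s t \<Longrightarrow> mset (contents2 t) = mset (contents2 s)"
  by (induction rule: step2.induct) (simp_all add: add_ac)

lemma steps2_mset_contents: "step2\<^sup>*\<^sup>* s t \<Longrightarrow> mset (contents2 t) = mset (contents2 s)"
  by (induction rule: rtranclp_induct) (simp_all add: step2_mset_contents)

lemma steps2_distinct_contents: "step2\<^sup>*\<^sup>* s t \<Longrightarrow> distinct (contents2 s) \<Longrightarrow> distinct (contents2 t)"
  using steps2_mset_contents mset_eq_imp_distinct_iff by metis

lemma stacks_sorted2_iff: "stacks_sorted2 s \<longleftrightarrow> wf_state 2 (state_of2 s)"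
  by (cases s) (auto simp: wf_state_def less_2_cases_iff)

lemma steps2_stacks_sorted:
  assumes "step2\<^sup>*\<^sup>* (p, [], [], [], []) s"
  shows "stacks_sorted2 s"
proof -
  have "(step 2)\<^sup>*\<^sup>* (p, replicate 2 [], [], []) (state_of2 s)"
    using steps2_imp_steps[OF assms] by (simp add: numeral_2_eq_2)
  then show ?thesis
    using steps_wf_state wf_state_init stacks_sorted2_iff by blast
qed

lemma steps2_flush: "step2\<^sup>*\<^sup>* (inp, D1, D2, I, out) (inp, D1, D2, [], out @ I)"
proof (induction I arbitrary: out)
  case (Cons x I)
  have "step2 (inp, D1, D2, x # I, out) (inp, D1, D2, I, out @ [x])" by (rule step2.dout)
  with Cons[of "out @ [x]"] show ?case by (simp add: converse_rtranclp_into_rtranclp)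
qed simp

lemma sortable_2I:
  assumes "step2\<^sup>*\<^sup>* (p, [], [], [], []) ([], [], [], I, out)" "sorted (out @ I)"
  shows "sortable 2 p"
proof -
  have run: "step2\<^sup>*\<^sup>* (p, [], [], [], []) ([], [], [], [], out @ I)"
    using rtranclp_trans[OF assms(1) steps2_flush] by simp
  then have "mset (out @ I) = mset p"
    using steps2_mset_contents by fastforce
  then have "sort p = out @ I" using assms(2) by (rule properties_for_sort)
  with run show ?thesis unfolding sortable_2_iff by simp
qed

text \<open>
  Operation n is d_n, and every n \<ge> 3 is the output move. Evaluating run_ops by simp
  replays a concrete sequence of moves.
\<close>

definition try_op :: "nat \<Rightarrow> state2 \<Rightarrow> state2 option" where
  "try_op n s = (case s of (inp, D1, D2, I, out) \<Rightarrow>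
     if n = 0 then (case inp of [] \<Rightarrow> None
       | x # r \<Rightarrow> if D1 = [] \<or> x > hd D1 then Some (r, x # D1, D2, I, out) else None)
     else if n = 1 then (case D1 of [] \<Rightarrow> None
       | x # r \<Rightarrow> if D2 = [] \<or> x > hd D2 then Some (inp, r, x # D2, I, out) else None)
     else if n = 2 then (case D2 of [] \<Rightarrow> None
       | x # r \<Rightarrow> if I = [] \<or> x < hd I then Some (inp, D1, r, x # I, out) else None)
     else (case I of [] \<Rightarrow> None | x # r \<Rightarrow> Some (inp, D1, D2, r, out @ [x])))"

fun run_ops :: "nat list \<Rightarrow> state2 \<Rightarrow> state2 option" where
  "run_ops [] s = Some s"
| "run_ops (n # ns) s = (case try_op n s of None \<Rightarrow> None | Some t \<Rightarrow> run_ops ns t)"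

lemma try_op_step2: "try_op n s = Some t \<Longrightarrow> step2 s t"
  unfolding try_op_def
  by (auto split: prod.splits list.splits if_splits intro: step2.intros)

lemma run_ops_steps2: "run_ops ns s = Some t \<Longrightarrow> step2\<^sup>*\<^sup>* s t"
proof (induction ns arbitrary: s)
  case (Cons n ns)
  then obtain u where "try_op n s = Some u" "run_ops ns u = Some t"
    by (auto split: option.splits)
  with Cons.IH show ?case by (meson converse_rtranclp_into_rtranclp try_op_step2)
qed simp

lemma omega_0 [simp]: "omega 0 = []"
  by (simp add: omega_def)

lemma omega_Suc [simp]: "omega (Suc j) = (2*j+4) # (2*j+7) # omega j"
  by (simp add: omega_def)

lemma set_omega: "x \<in> set (omega j) \<longleftrightarrow> (\<exists>m. 1 \<le> m \<and> m \<le> j \<and> (x = 2*m+2 \<or> x = 2*m+5))"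
  by (induction j) (auto simp: le_Suc_eq)

lemma distinct_omega: "distinct (omega j)"
proof (induction j)
  case (Suc j)
  have "2*j+4 \<notin> set (omega j)" "2*j+7 \<notin> set (omega j)"
    unfolding set_omega by presburger+
  with Suc show ?case by simp
qed simp

primrec omega_prefix :: "nat \<Rightarrow> nat \<Rightarrow> nat list" where
  "omega_prefix 0 k = []"
| "omega_prefix (Suc i) k = (if k \<le> i then (2*i+4) # (2*i+7) # omega_prefix i k else [])"

lemma omega_prefix_append: "k \<le> i \<Longrightarrow> omega i = omega_prefix i k @ omega k"
  by (induction i) (auto simp: le_Suc_eq)

lemma set_omega_prefix:
  "x \<in> set (omega_prefix i k) \<longleftrightarrow> (\<exists>m. k < m \<and> m \<le> i \<and> (x = 2*m+2 \<or> x = 2*m+5))"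
proof (induction i)
  case (Suc i)
  then show ?case
    by (cases "k \<le> i") (auto simp: le_Suc_eq, presburger+)
qed simp

lemma small_notin_omega: "x < 4 \<or> x = 5 \<Longrightarrow> x \<notin> set (omega j)"
  unfolding set_omega by presburger

lemma top_notin_omega: "2*j+4 \<notin> set (omega j)"
  unfolding set_omega by presburger

lemma alpha_eq: "alpha j = (2*j+4) # 3 # omega j @ [1, 5, 2]"
  by (simp add: alpha_def)

lemma length_alpha: "length (alpha j) = 2*j+5"
  by (induction j) (simp_all add: alpha_def)

lemma is_perm_alpha: "is_perm (alpha j)"
proof -
  have "x \<in> set (alpha j) \<longleftrightarrow> x \<in> {1..2*j+5}" for x
    unfolding alpha_eq set_simps set_append Un_iff insert_iff set_omega
    by auto presburger+
  then have "set (alpha j) = {1..length (alpha j)}"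
    unfolding length_alpha by blast
  moreover have "distinct (alpha j)"
    using distinct_omega small_notin_omega[of _ j] top_notin_omega[of j] by (simp add: alpha_eq)
  ultimately show ?thesis unfolding is_perm_def by simp
qed

lemma inj_alpha: "inj alpha"
  by (rule injI) (metis length_alpha add_right_cancel mult_left_cancel zero_neq_numeral)

section \<open>Dead ends\<close>

fun precedes :: "nat \<Rightarrow> nat \<Rightarrow> nat list \<Rightarrow> bool" where
  "precedes x z [] \<longleftrightarrow> False"
| "precedes x z (h # t) \<longleftrightarrow> h = x \<and> z \<in> set t \<or> precedes x z t"

lemma precedes_imp_mem: "precedes x z xs \<Longrightarrow> z \<in> set xs"
  by (induction xs) auto

text \<open>
  y waits in I, so x > y cannot enter I before y is output, while z < y must be output
  before y and still has to pass x in the stacks.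
\<close>

fun blocked :: "nat \<Rightarrow> nat \<Rightarrow> nat \<Rightarrow> state2 \<Rightarrow> bool" where
  "blocked y x z (inp, D1, D2, I, out) \<longleftrightarrow>
     y \<in> set I \<and> 0 < z \<and> z < y \<and> y < x \<and>
     x \<notin> set I \<and> x \<notin> set out \<and> z \<notin> set I \<and> z \<notin> set out \<and> z \<notin> set D2 \<and>
     (x \<in> set D2 \<and> (z \<in> set inp \<or> z \<in> set D1) \<or>
      x \<in> set D1 \<and> (z \<in> set D1 \<or> z \<in> set inp) \<or>
      precedes x z inp)"

fun output_ok :: "state2 \<Rightarrow> bool" where
  "output_ok (inp, D1, D2, I, out) \<longleftrightarrow> out = [1..<length out + 1]"

definition doomed :: "state2 \<Rightarrow> bool" where
  "doomed s \<longleftrightarrow> \<not> output_ok s \<or> (\<exists>y x z. blocked y x z s)"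

lemma doomedI_blocked: "blocked y x z s \<Longrightarrow> doomed s"
  unfolding doomed_def by blast

lemma doomedI_output: "\<not> output_ok s \<Longrightarrow> doomed s"
  unfolding doomed_def by blast

lemma step2_not_output_ok: "step2 s t \<Longrightarrow> \<not> output_ok s \<Longrightarrow> \<not> output_ok t"
  by (induction rule: step2.induct) auto

lemma output_ok_snoc_mem:
  assumes "out @ [y] = [1..<length (out @ [y]) + 1]" "0 < z" "z < y"
  shows "z \<in> set out"
proof -
  from assms(1) have out: "out = [1..<length out + 1]" and y: "y = length out + 1" by simp_all
  from assms(2,3) y have "z \<in> set [1..<length out + 1]" by auto
  then show ?thesis using out by metis
qed

lemma step2_blocked:
  assumes "step2 s t" "stacks_sorted2 s" "distinct (contents2 s)" "blocked y x z s"
  shows "blocked y x z t \<or> \<not> output_ok t"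
  using assms
proof (induction rule: step2.induct)
  case (d0 D1 h inp D2 I out)
  then show ?case by auto
next
  case (d1 D2 t inp D1 I out)
  have "\<forall>w\<in>set D2. w < t" "\<forall>w\<in>set D1. w < t" "t \<notin> set inp"
    using d1 sorted_wrt_hd_imp_all[of "(>)" D2 t] by auto
  moreover have "z \<noteq> t"
    using d1.prems(3) calculation by (auto dest: precedes_imp_mem)
  ultimately show ?case using d1.prems(3) by (auto dest: less_asym)
next
  case (d2 I t inp D1 D2 out)
  have "\<forall>w\<in>set I. t < w" using d2 sorted_wrt_hd_imp_all[of "(<)" I t] by simp
  then show ?case using d2.prems(3) by (auto dest: less_asym)
next
  case (dout inp D1 D2 t I out)
  then show ?case using output_ok_snoc_mem[of out y z] by (cases "t = y") auto
qed

lemma step2_doomed: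
  assumes "step2 s t" "stacks_sorted2 s" "distinct (contents2 s)" "doomed s"
  shows "doomed t"
  using assms step2_not_output_ok step2_blocked unfolding doomed_def by blast

section \<open>The run on alpha j is forced\<close>

definition stage :: "nat \<Rightarrow> nat \<Rightarrow> state2" where
  "stage j i = (omega i @ [1, 5, 2], [3], [2*i+4], [2*i+6..<2*j+6], [])"

definition round_path :: "nat \<Rightarrow> nat \<Rightarrow> state2 list" where
  "round_path j m =
    (let w = omega m @ [1, 5, 2]; L = [2*m+8..<2*j+6] in
     [stage j (Suc m),
      ((2*m+7) # w, [2*m+4, 3], [2*m+6], L, []),
      (w, [2*m+7, 2*m+4, 3], [2*m+6], L, []),
      (w, [2*m+4, 3], [2*m+7, 2*m+6], L, []),
      (w, [2*m+4, 3], [2*m+6], (2*m+7) # L, []),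
      (w, [2*m+4, 3], [], (2*m+6) # (2*m+7) # L, []),
      stage j m])"

lemma hd_omega_suffix: "omega m @ [1, 5, 2] = h # t \<Longrightarrow> h \<le> 2*m+2"
  by (cases m) auto

lemma upt_pair_Cons: "i < j \<Longrightarrow> [2*i+6..<2*j+6] = (2*i+6) # (2*i+7) # [2*i+8..<2*j+6]"
  by (simp add: upt_conv_Cons numeral_eq_Suc)

lemma round_path_forced:
  assumes "m < j" "Suc n < length (round_path j m)" "step2 (round_path j m ! n) t"
  shows "t = round_path j m ! Suc n \<or> doomed t"
proof -
  from assms(2) have "n < 6" by (simp add: round_path_def Let_def)
  then consider "n = 0" | "n = Suc 0" | "n = Suc (Suc 0)" | "n = Suc (Suc (Suc 0))"
    | "n = Suc (Suc (Suc (Suc 0)))" | "n = Suc (Suc (Suc (Suc (Suc 0))))"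
    by linarith
  then show ?thesis
    using assms(3) unfolding round_path_def stage_def Let_def upt_pair_Cons[OF assms(1)]
    by cases (hypsubst, simp only: nth_Cons_0 nth_Cons_Suc, erule step2.cases;
        auto intro: doomedI_blocked[of "2*m+6" "2*m+7" 2] doomedI_output
        dest: hd_omega_suffix[unfolded One_nat_def] simp: upt_eq_Cons_conv ac_simps)+
qed

definition prologue_path :: "nat \<Rightarrow> state2 list" where
  "prologue_path j =
    [(alpha j, [], [], [], []),
     (3 # omega j @ [1, 5, 2], [2*j+4], [], [], []),
     (3 # omega j @ [1, 5, 2], [], [2*j+4], [], []),
     stage j j]"

lemma precedes_omega_suffix: "precedes (2*m+5) 2 (omega m @ [1, 5, 2])"
  by (cases m) auto

lemma prologue_path_forced:
  assumes "Suc n < length (prologue_path j)" "step2 (prologue_path j ! n) t"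
  shows "t = prologue_path j ! Suc n \<or> doomed t"
proof -
  from assms(1) have "n < 3" by (simp add: prologue_path_def)
  then consider "n = 0" | "n = Suc 0" | "n = Suc (Suc 0)" by linarith
  then show ?thesis
    using assms(2) precedes_omega_suffix[of j] unfolding prologue_path_def stage_def alpha_eq
    by cases (hypsubst, simp only: nth_Cons_0 nth_Cons_Suc, erule step2.cases;
        auto intro: doomedI_blocked[of "2*j+4" "2*j+5" 2])+
qed

lemma stage_0_doomed: "step2 (stage j 0) t \<Longrightarrow> doomed t"
  unfolding stage_def
  by (erule step2.cases) (auto intro: doomedI_blocked[of 4 5 2] doomedI_output simp: upt_eq_Cons_conv)

lemma path_step:
  assumes "\<And>n t. Suc n < length P \<Longrightarrow> step2 (P ! n) t \<Longrightarrow> t = P ! Suc n \<or> doomed t"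
    and "s \<in> set P" "step2 s t"
  shows "t \<in> set P \<or> doomed t \<or> s = last P"
proof -
  obtain n where n: "n < length P" "s = P ! n"
    using assms(2) by (auto simp: in_set_conv_nth)
  show ?thesis
  proof (cases "Suc n < length P")
    case True
    then show ?thesis using assms(1)[OF True] assms(3) n(2) nth_mem by blast
  next
    case False
    with n have "n = length P - 1" "P \<noteq> []" by auto
    then show ?thesis by (simp add: last_conv_nth n(2))
  qed
qed

definition forced :: "nat \<Rightarrow> state2 \<Rightarrow> bool" where
  "forced j s \<longleftrightarrow> s \<in> set (prologue_path j) \<or> (\<exists>m<j. s \<in> set (round_path j m))"

lemma step2_stage:
  assumes "i \<le> j" "step2 (stage j i) t"
  shows "forced j t \<or> doomed t"
proof (cases i)
  case 0
  with assms(2) show ?thesis using stage_0_doomed by blast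
next
  case (Suc m)
  then have m: "m < j" using assms(1) by simp
  have "step2 (round_path j m ! 0) t"
    using assms(2) Suc by (simp add: round_path_def Let_def)
  then have "t = round_path j m ! 1 \<or> doomed t"
    using round_path_forced[OF m, of 0] by (simp add: round_path_def Let_def)
  moreover have "round_path j m ! 1 \<in> set (round_path j m)"
    by (simp add: round_path_def Let_def)
  ultimately show ?thesis using m unfolding forced_def by blast
qed

lemma step2_forced:
  assumes "forced j s" "step2 s t"
  shows "forced j t \<or> doomed t"
  using assms(1)[unfolded forced_def]
proof (elim disjE exE conjE)
  assume "s \<in> set (prologue_path j)"
  then have "t \<in> set (prologue_path j) \<or> doomed t \<or> s = stage j j"
    using path_step[OF prologue_path_forced _ assms(2)] by (simp add: prologue_path_def)
  then show ?thesis using step2_stage[of j j t] assms(2) unfolding forced_def by auto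
next
  fix m assume m: "m < j" "s \<in> set (round_path j m)"
  then have "t \<in> set (round_path j m) \<or> doomed t \<or> s = stage j m"
    using path_step[OF round_path_forced[OF m(1)] _ assms(2)] by (simp add: round_path_def Let_def)
  then show ?thesis using step2_stage[of m j t] m(1) assms(2) unfolding forced_def by auto
qed

lemma steps2_alpha_forced_or_doomed:
  assumes "step2\<^sup>*\<^sup>* (alpha j, [], [], [], []) s"
  shows "forced j s \<or> doomed s"
  using assms
proof (induction rule: rtranclp_induct)
  case base
  then show ?case by (simp add: forced_def prologue_path_def)
next
  case (step s t)
  have "distinct (contents2 s)"
    using steps2_distinct_contents[OF step.hyps(1)] is_perm_alpha[of j] by (simp add: is_perm_def)
  with step show ?case
    using steps2_stacks_sorted step2_doomed step2_forced by blast
qed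

lemma not_sortable_alpha: "\<not> sortable 2 (alpha j)"
proof
  assume "sortable 2 (alpha j)"
  then have "forced j ([], [], [], [], sort (alpha j)) \<or> doomed ([], [], [], [], sort (alpha j))"
    unfolding sortable_2_iff by (rule steps2_alpha_forced_or_doomed)
  moreover have "\<not> forced j ([], [], [], [], sort (alpha j))"
    by (auto simp: forced_def prologue_path_def round_path_def stage_def Let_def alpha_eq)
  moreover have "sort (alpha j) = [1..<length (sort (alpha j)) + 1]"
    using sort_is_perm[OF is_perm_alpha[of j]] by (metis length_sort)
  then have "output_ok ([], [], [], [], sort (alpha j))"
    by (simp only: output_ok.simps)
  then have "\<not> doomed ([], [], [], [], sort (alpha j))"
    by (simp add: doomed_def del: output_ok.simps)
  ultimately show False by blast
qed

section \<open>One-point deletions of alpha j are 2-sortable\<close>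

lemma upt_append_pair:
  "k \<le> i \<Longrightarrow> [2*k+6..<2*i+6] @ (2*i+6) # (2*i+7) # L = [2*k+6..<2*Suc i+6] @ L"
proof -
  assume "k \<le> i"
  then have "[2*k+6..<2*Suc i+6] = [2*k+6..<2*i+6] @ [2*i+6, 2*i+7]"
    by (simp add: upt_add_eq_append[of "2*k+6" "2*i+6" 2] numeral_eq_Suc)
  then show ?thesis by simp
qed

lemma steps2_omega_prefix:
  assumes "k \<le> i" "L = [] \<or> 2*i+6 \<le> hd L" "D1 = [] \<or> hd D1 < 4" "D2 = [] \<or> hd D2 < 4"
  shows "step2\<^sup>*\<^sup>* (omega_prefix i k @ w, D1, (2*i+4) # D2, L, out)
                   (w, D1, (2*k+4) # D2, [2*k+6..<2*i+6] @ L, out)"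
  using assms
proof (induction i arbitrary: L)
  case (Suc i)
  show ?case
  proof (cases "k \<le> i")
    case False
    with Suc.prems have "k = Suc i" by simp
    then show ?thesis by simp
  next
    case True
    have "run_ops [0, 0, 1, 2, 2, 1] ((2*i+4) # (2*i+7) # omega_prefix i k @ w, D1, (2*i+6) # D2, L, out) =
        Some (omega_prefix i k @ w, D1, (2*i+4) # D2, (2*i+6) # (2*i+7) # L, out)"
      using Suc.prems by (auto simp: try_op_def)
    then have "step2\<^sup>*\<^sup>* ((2*i+4) # (2*i+7) # omega_prefix i k @ w, D1, (2*i+6) # D2, L, out)
        (omega_prefix i k @ w, D1, (2*i+4) # D2, (2*i+6) # (2*i+7) # L, out)"
      by (rule run_ops_steps2)
    moreover have "step2\<^sup>*\<^sup>* (omega_prefix i k @ w, D1, (2*i+4) # D2, (2*i+6) # (2*i+7) # L, out)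
        (w, D1, (2*k+4) # D2, [2*k+6..<2*i+6] @ (2*i+6) # (2*i+7) # L, out)"
      using Suc.IH[of "(2*i+6) # (2*i+7) # L"] True Suc.prems by simp
    ultimately have "step2\<^sup>*\<^sup>* ((2*i+4) # (2*i+7) # omega_prefix i k @ w, D1, (2*i+6) # D2, L, out)
        (w, D1, (2*k+4) # D2, [2*k+6..<2*Suc i+6] @ L, out)"
      using upt_append_pair[OF True, of L] by (simp only: rtranclp_trans)
    moreover have "omega_prefix (Suc i) k @ w = (2*i+4) # (2*i+7) # omega_prefix i k @ w"
      "2 * Suc i + 4 = 2*i+6"
      using True by simp_all
    ultimately show ?thesis by (simp only:)
  qed
qed simp

lemma sortable_2I_via_43:
  assumes "step2\<^sup>*\<^sup>* (p, [], [], [], []) ([1, 5, 2], [], [4, 3], L, [])"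
    and "sorted L" "\<forall>x\<in>set L. 5 < x"
  shows "sortable 2 p"
proof -
  have "run_ops [0, 0, 1, 2, 2, 2, 1, 2, 3, 0, 1, 2] ([1, 5, 2], [], [4, 3], L, []) =
      Some ([], [], [], 2 # 3 # 4 # 5 # L, [1])"
    using hd_bound[where R = "(<)", OF assms(3)] by (auto simp: try_op_def)
  from rtranclp_trans[OF assms(1) run_ops_steps2[OF this]] show ?thesis
    by (rule sortable_2I) (use assms(2,3) in \<open>auto simp: sorted_append\<close>)
qed

lemma sortable_2I_via_3:
  assumes "step2\<^sup>*\<^sup>* (p, [], [], [], []) (omega i @ [1, 5, 2], [], [3], L, [])"
    and "sorted L" "\<forall>x\<in>set L. 2*i+5 < x"
  shows "sortable 2 p"
proof (cases i)
  case 0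
  have "run_ops [0, 0, 1, 2, 2, 1, 2, 3, 0, 1, 2] ([1, 5, 2], [], [3], L, []) =
      Some ([], [], [], 2 # 3 # 5 # L, [1])"
    using hd_bound[where R = "(<)", OF assms(3)] 0 by (auto simp: try_op_def)
  from rtranclp_trans[OF assms(1)[unfolded 0 omega_0 append_Nil] run_ops_steps2[OF this]] show ?thesis
    by (rule sortable_2I) (use assms(2,3) 0 in \<open>auto simp: sorted_append\<close>)
next
  case (Suc m)
  have "step2\<^sup>*\<^sup>* (p, [], [], [], []) ((2*m+4) # (2*m+7) # omega m @ [1, 5, 2], [], [3], L, [])"
    using assms(1) Suc by simp
  moreover have "run_ops [0, 0, 1, 2, 1] ((2*m+4) # (2*m+7) # omega m @ [1, 5, 2], [], [3], L, []) =
      Some (omega m @ [1, 5, 2], [], [2*m+4, 3], (2*m+7) # L, [])"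
    using hd_bound[where R = "(<)", OF assms(3)] Suc by (auto simp: try_op_def)
  moreover have "step2\<^sup>*\<^sup>* (omega m @ [1, 5, 2], [], [2*m+4, 3], (2*m+7) # L, [])
      ([1, 5, 2], [], [4, 3], [6..<2*m+6] @ (2*m+7) # L, [])"
    using steps2_omega_prefix[of 0 m "(2*m+7) # L" "[]" "[3]" "[1, 5, 2]" "[]"]
    by (simp add: omega_prefix_append[of 0 m, simplified])
  ultimately have "step2\<^sup>*\<^sup>* (p, [], [], [], []) ([1, 5, 2], [], [4, 3], [6..<2*m+6] @ (2*m+7) # L, [])"
    by (blast dest: run_ops_steps2 intro: rtranclp_trans)
  then show ?thesis
    by (rule sortable_2I_via_43) (use assms(2,3) Suc in \<open>auto simp: sorted_append\<close>)
qed

lemma steps2_alpha_prefix: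
  assumes "k \<le> j"
  shows "step2\<^sup>*\<^sup>* ((2*j+4) # 3 # omega_prefix j k @ w, [], [], [], [])
                   (w, [3], [2*k+4], [2*k+6..<2*j+6], [])"
proof -
  have "run_ops [0, 1, 0] ((2*j+4) # 3 # omega_prefix j k @ w, [], [], [], []) =
      Some (omega_prefix j k @ w, [3], [2*j+4], [], [])"
    by (simp add: try_op_def)
  from run_ops_steps2[OF this] show ?thesis
    using steps2_omega_prefix[OF assms, of "[]" "[3]" "[]" w "[]"] by simp
qed

lemma steps2_alpha_prefix_omega:
  "step2\<^sup>*\<^sup>* ((2*j+4) # 3 # omega j @ w, [], [], [], []) (w, [3], [4], [6..<2*j+6], [])"
  using steps2_alpha_prefix[of 0 j w] by (simp add: omega_prefix_append[of 0 j, simplified])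

lemma steps2_alpha_prefix_Suc:
  assumes "k < j"
  shows "step2\<^sup>*\<^sup>* ((2*j+4) # 3 # omega_prefix j (Suc k) @ w, [], [], [], [])
                   (w, [3], [2*k+6], [2*k+8..<2*j+6], [])"
proof -
  have e: "2 * Suc k + 4 = 2*k+6" "2 * Suc k + 6 = 2*k+8" by simp_all
  show ?thesis using steps2_alpha_prefix[of "Suc k" j w, unfolded e] assms by (simp add: Suc_le_eq)
qed

lemma sortable_without_1: "sortable 2 ((2*j+4) # 3 # omega j @ [5, 2])"
proof -
  have "run_ops [0, 1, 2, 2, 1, 2, 0, 1, 2] ([5, 2], [3], [4], [6..<2*j+6], []) =
      Some ([], [], [], 2 # 3 # 4 # 5 # [6..<2*j+6], [])"
    using hd_bound[of "[6..<2*j+6]" "(<)" 5] by (auto simp: try_op_def)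
  from rtranclp_trans[OF steps2_alpha_prefix_omega run_ops_steps2[OF this]] show ?thesis
    by (rule sortable_2I) (auto simp: sorted_append)
qed

lemma sortable_without_2: "sortable 2 ((2*j+4) # 3 # omega j @ [1, 5])"
proof -
  have "run_ops [2, 1, 2, 0, 1, 2, 3, 3, 3, 0, 1, 2] ([1, 5], [3], [4], [6..<2*j+6], []) =
      Some ([], [], [], 5 # [6..<2*j+6], [1, 3, 4])"
    using hd_bound[of "[6..<2*j+6]" "(<)" 5] by (auto simp: try_op_def)
  from rtranclp_trans[OF steps2_alpha_prefix_omega run_ops_steps2[OF this]] show ?thesis
    by (rule sortable_2I) (auto simp: sorted_append)
qed

lemma sortable_without_5: "sortable 2 ((2*j+4) # 3 # omega j @ [1, 2])"
proof -
  have "run_ops [2, 1, 2, 0, 1, 2, 3, 0, 1, 2] ([1, 2], [3], [4], [6..<2*j+6], []) =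
      Some ([], [], [], 2 # 3 # 4 # [6..<2*j+6], [1])"
    using hd_bound[of "[6..<2*j+6]" "(<)" 4] by (auto simp: try_op_def)
  from rtranclp_trans[OF steps2_alpha_prefix_omega run_ops_steps2[OF this]] show ?thesis
    by (rule sortable_2I) (auto simp: sorted_append)
qed

lemma sortable_without_3: "sortable 2 ((2*j+4) # omega j @ [1, 5, 2])"
proof -
  have "run_ops [0, 1] ((2*j+4) # omega j @ [1, 5, 2], [], [], [], []) =
      Some (omega j @ [1, 5, 2], [], [2*j+4], [], [])"
    by (simp add: try_op_def)
  moreover have "step2\<^sup>*\<^sup>* (omega j @ [1, 5, 2], [], [2*j+4], [], []) ([1, 5, 2], [], [4], [6..<2*j+6], [])"
    using steps2_omega_prefix[of 0 j "[]" "[]" "[]" "[1, 5, 2]" "[]"]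
    by (simp add: omega_prefix_append[of 0 j, simplified])
  moreover have "run_ops [0, 0, 1, 2, 2, 1, 2, 3, 0, 1, 2] ([1, 5, 2], [], [4], [6..<2*j+6], []) =
      Some ([], [], [], 2 # 4 # 5 # [6..<2*j+6], [1])"
    using hd_bound[of "[6..<2*j+6]" "(<)" 5] by (auto simp: try_op_def)
  ultimately have "step2\<^sup>*\<^sup>* ((2*j+4) # omega j @ [1, 5, 2], [], [], [], [])
      ([], [], [], 2 # 4 # 5 # [6..<2*j+6], [1])"
    by (blast dest: run_ops_steps2 intro: rtranclp_trans)
  then show ?thesis by (rule sortable_2I) (auto simp: sorted_append)
qed

lemma sortable_without_top: "sortable 2 (3 # omega j @ [1, 5, 2])"
proof -
  have "run_ops [0, 1] (3 # omega j @ [1, 5, 2], [], [], [], []) =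
      Some (omega j @ [1, 5, 2], [], [3], [], [])"
    by (simp add: try_op_def)
  from run_ops_steps2[OF this] show ?thesis
    by (rule sortable_2I_via_3) simp_all
qed

lemma sortable_without_pair_odd:
  assumes "k < j"
  shows "sortable 2 ((2*j+4) # 3 # omega_prefix j (Suc k) @ (2*k+4) # omega k @ [1, 5, 2])"
proof -
  have "step2\<^sup>*\<^sup>* ((2*j+4) # 3 # omega_prefix j (Suc k) @ (2*k+4) # omega k @ [1, 5, 2], [], [], [], [])
      ((2*k+4) # omega k @ [1, 5, 2], [3], [2*k+6], [2*k+8..<2*j+6], [])"
    using assms by (rule steps2_alpha_prefix_Suc)
  moreover have "run_ops [2, 1, 0, 1] ((2*k+4) # omega k @ [1, 5, 2], [3], [2*k+6], [2*k+8..<2*j+6], []) =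
      Some (omega k @ [1, 5, 2], [], [2*k+4, 3], (2*k+6) # [2*k+8..<2*j+6], [])"
    using hd_bound[of "[2*k+8..<2*j+6]" "(<)" "2*k+6"] by (auto simp: try_op_def)
  moreover have "step2\<^sup>*\<^sup>* (omega k @ [1, 5, 2], [], [2*k+4, 3], (2*k+6) # [2*k+8..<2*j+6], [])
      ([1, 5, 2], [], [4, 3], [6..<2*k+6] @ (2*k+6) # [2*k+8..<2*j+6], [])"
    using steps2_omega_prefix[of 0 k "(2*k+6) # [2*k+8..<2*j+6]" "[]" "[3]" "[1, 5, 2]" "[]"]
    by (simp add: omega_prefix_append[of 0 k, simplified])
  ultimately have "step2\<^sup>*\<^sup>* ((2*j+4) # 3 # omega_prefix j (Suc k) @ (2*k+4) # omega k @ [1, 5, 2], [], [], [], [])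
      ([1, 5, 2], [], [4, 3], [6..<2*k+6] @ (2*k+6) # [2*k+8..<2*j+6], [])"
    by (blast dest: run_ops_steps2 intro: rtranclp_trans)
  then show ?thesis by (rule sortable_2I_via_43) (auto simp: sorted_append)
qed

lemma sortable_without_pair_even:
  assumes "k < j"
  shows "sortable 2 ((2*j+4) # 3 # omega_prefix j (Suc k) @ (2*k+7) # omega k @ [1, 5, 2])"
proof -
  have "step2\<^sup>*\<^sup>* ((2*j+4) # 3 # omega_prefix j (Suc k) @ (2*k+7) # omega k @ [1, 5, 2], [], [], [], [])
      ((2*k+7) # omega k @ [1, 5, 2], [3], [2*k+6], [2*k+8..<2*j+6], [])"
    using assms by (rule steps2_alpha_prefix_Suc)
  moreover have "run_ops [0, 1, 2, 2, 1] ((2*k+7) # omega k @ [1, 5, 2], [3], [2*k+6], [2*k+8..<2*j+6], []) =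
      Some (omega k @ [1, 5, 2], [], [3], (2*k+6) # (2*k+7) # [2*k+8..<2*j+6], [])"
    using hd_bound[of "[2*k+8..<2*j+6]" "(<)" "2*k+7"] by (auto simp: try_op_def)
  ultimately have "step2\<^sup>*\<^sup>* ((2*j+4) # 3 # omega_prefix j (Suc k) @ (2*k+7) # omega k @ [1, 5, 2], [], [], [], [])
      (omega k @ [1, 5, 2], [], [3], (2*k+6) # (2*k+7) # [2*k+8..<2*j+6], [])"
    by (blast dest: run_ops_steps2 intro: rtranclp_trans)
  then show ?thesis by (rule sortable_2I_via_3) (auto simp: sorted_append)
qed

lemma sortable_removeAll_alpha:
  assumes "v \<in> set (alpha j)"
  shows "sortable 2 (removeAll v (alpha j))"
proof -
  have "1 \<le> v \<and> v \<le> 2*j+5" using assms is_perm_alpha[of j] length_alpha[of j]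
    by (simp add: is_perm_def)
  then have "v = 1 \<or> v = 2 \<or> v = 3 \<or> v = 5 \<or> v = 2*j+4 \<or>
      (\<exists>k<j. v = 2*k+7) \<or> (\<exists>k<j. v = 2*k+4)"
    by presburger
  then consider "v = 1" | "v = 2" | "v = 3" | "v = 5" | "v = 2*j+4"
    | k where "k < j" "v = 2*k+7" | k where "k < j" "v = 2*k+4"
    by blast
  then show ?thesis
  proof cases
    case (6 k)
    then have "v \<notin> set (omega_prefix j (Suc k))" "v \<notin> set (omega k)"
      unfolding set_omega_prefix set_omega by presburger+
    moreover have "omega j = omega_prefix j (Suc k) @ (2*k+4) # (2*k+7) # omega k"
      using omega_prefix_append[of "Suc k" j] 6 by simp
    ultimately have "removeAll v (alpha j) =
        (2*j+4) # 3 # omega_prefix j (Suc k) @ (2*k+4) # omega k @ [1, 5, 2]"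
      using 6 by (simp add: alpha_eq) presburger
    with 6 show ?thesis using sortable_without_pair_odd by simp
  next
    case (7 k)
    then have "v \<notin> set (omega_prefix j (Suc k))" "v \<notin> set (omega k)"
      unfolding set_omega_prefix set_omega by presburger+
    moreover have "omega j = omega_prefix j (Suc k) @ (2*k+4) # (2*k+7) # omega k"
      using omega_prefix_append[of "Suc k" j] 7 by simp
    ultimately have "removeAll v (alpha j) =
        (2*j+4) # 3 # omega_prefix j (Suc k) @ (2*k+7) # omega k @ [1, 5, 2]"
      using 7 by (simp add: alpha_eq)
    with 7 show ?thesis using sortable_without_pair_even by simp
  qed (use small_notin_omega[of v j] top_notin_omega[of j] sortable_without_1 sortable_without_2
      sortable_without_3 sortable_without_5 sortable_without_top in \<open>simp_all add: alpha_eq\<close>)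
qed

theorem mainTheorem4:
  shows "is_class (Sort 2) \<and> infinite (basis (Sort 2)) \<and> (\<forall>j. alpha j \<in> basis (Sort 2))"
proof -
  have alpha_basis: "alpha j \<in> basis (Sort 2)" for j
    using basis_SortI is_perm_alpha not_sortable_alpha sortable_removeAll_alpha by blast
  then have "range alpha \<subseteq> basis (Sort 2)" by blast
  then have "infinite (basis (Sort 2))"
    using inj_on_finite[OF inj_alpha] by blast
  with alpha_basis show ?thesis using is_class_Sort by blast
qed

end
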